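(* Let $\kappa$ be a maximal clique of the IDNC graph $\mathcal G$ chosen for transmission at time $t$, with all quantities without time index denoting their values at time $t$. For a receiver $i\in\mathcal T(\kappa)$, the expected primary degree of a vertex of receiver $i$ at time $t+1$ is \[ \mathbb E\big[\Delta_{i}^{(t+1)}\big]=\mathbb E\big[\Delta_i^{(t)}\big]+\alpha_i, \] and for a receiver $i\notin\mathcal T(\kappa)$ it is \[ \mathbb E\big[\Delta_{i}^{(t+1)}\big]=\mathbb E\big[\Delta_i^{(t)}\big]+\beta_i, \] where \[ \alpha_i=\sum_{k\ne i} q_i\xi_k-\sum_{k\in\mathcal T_\rho(\kappa),k\ne i}\Phi_{ik}(q_i)+\sum_{k\in\mathcal T_\sigma(\kappa),k\ne i}\Lambda_{ik}(q_i),\qquad \beta_i=-\sum_{k\in\mathcal T_\rho(\kappa),k\ne i}\Phi_{ik}(0)+\sum_{k\in\mathcal T_\sigma(\kappa),k\ne i}\Lambda_{ik}(0), \] \[ \Phi_{ik}(x)=\frac{q_k}{N}\Big(1+\frac{(\varrho_k-\psi_k+1)(\varrho_i+x)}{N-1}\Big),\quad \Lambda_{ik}(x)=\frac{q_k\psi_k(\varrho_i+x)}{N(N-1)},\quad \xi_k=\frac{\psi_k\varrho_k}{N(N-1)}, \] with the sum over $k\ne i$ ranging over $k\in\{1,\dots,M\}$.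
   Context: A sender holds a frame $\mathcal N$ of $N\ge2$ packets and serves receivers $\mathcal M=\{1,\dots,M\}$. For each receiver $i$ there are sets $\mathcal H_i\subseteq\mathcal N$ (Has set), $\mathcal L_i=\mathcal N\setminus\mathcal H_i$ (Lacks set) and $\mathcal W_i\subseteq\mathcal L_i$ (Wants set), with cardinalities $\varrho_i=|\mathcal H_i|$, $\psi_i=|\mathcal W_i|$. Receiver $i$ has packet success probability $q_i\in[0,1]$. The IDNC graph $\mathcal G$ has a primary vertex $v_{ij}$ for each $i\in\mathcal M$, $j\in\mathcal W_i$, and a secondary vertex $v_{ij}$ for each $i\in\mathcal M$, $j\in\mathcal L_i\setminus\mathcal W_i$; two distinct vertices $v_{ij},v_{kl}$ are adjacent iff (C1) $j=l$, or (C2) $j\in\mathcal H_k$ and $l\in\mathcal H_i$. The primary graph is the subgraph induced by primary vertices; primary degree means degree in it. For a maximal clique $\kappa$ of $\mathcal G$, $\mathcal T_\rho(\kappa)$ (resp. $\mathcal T_\sigma(\kappa)$) is the set of receivers having a primary (resp. secondary) vertex in $\kappa$, and $\mathcal T(\kappa)=\mathcal T_\rho(\kappa)\cup\mathcal T_\sigma(\kappa)$. Transmission model: when $\kappa$ is transmitted at time $t$, each $k\in\mathcal T(\kappa)$ receives it with probability $q_k$, independently; let $X_k\in\{0,1\}$ be the reception indicator. At time $t+1$ the cardinalities become $\varrho_k'=\varrho_k+X_k$ for $k\in\mathcal T(\kappa)$, $\psi_k'=\psi_k-X_k$ for $k\in\mathcal T_\rho(\kappa)$, and are otherwise unchanged.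 Expected degrees are computed ignoring set contents (sets treated as uniformly random given their cardinalities): for cardinality vectors $\boldsymbol\varrho,\boldsymbol\psi$, the expected primary degree of a vertex of receiver $i$ is $D_i(\boldsymbol\varrho,\boldsymbol\psi)=\sum_{k\ne i}\frac{\psi_k}{N}\big(1+\frac{\varrho_k\varrho_i}{N-1}\big)$. Thus $\mathbb E[\Delta_i^{(t)}]=D_i(\boldsymbol\varrho,\boldsymbol\psi)$ and $\mathbb E[\Delta_i^{(t+1)}]=\mathbb E_X\big[D_i(\boldsymbol\varrho',\boldsymbol\psi')\big]$, the expectation over the independent receptions. *)

theory Defs
  imports "HOL-Probability.Probability"
begin

text \<open>Packets are 1..N, receivers are 1..M. A vertex v_ij is the pair (i,j).\<close>

definition Lacks :: "nat \<Rightarrow> (nat \<Rightarrow> nat set) \<Rightarrow> nat \<Rightarrow> nat set" where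
  "Lacks N H i = {1..N} - H i"

definition primary_vertices :: "nat \<Rightarrow> (nat \<Rightarrow> nat set) \<Rightarrow> (nat \<times> nat) set" where
  "primary_vertices M W = {(i,j). i \<in> {1..M} \<and> j \<in> W i}"

definition secondary_vertices ::
  "nat \<Rightarrow> nat \<Rightarrow> (nat \<Rightarrow> nat set) \<Rightarrow> (nat \<Rightarrow> nat set) \<Rightarrow> (nat \<times> nat) set" where
  "secondary_vertices N M H W = {(i,j). i \<in> {1..M} \<and> j \<in> Lacks N H i - W i}"

definition idnc_vertices ::
  "nat \<Rightarrow> nat \<Rightarrow> (nat \<Rightarrow> nat set) \<Rightarrow> (nat \<Rightarrow> nat set) \<Rightarrow> (nat \<times> nat) set" where
  "idnc_vertices N M H W = primary_vertices M W \<union> secondary_vertices N M H W"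

definition idnc_adj :: "(nat \<Rightarrow> nat set) \<Rightarrow> nat \<times> nat \<Rightarrow> nat \<times> nat \<Rightarrow> bool" where
  "idnc_adj H v w = (v \<noteq> w \<and> (snd v = snd w \<or> (snd v \<in> H (fst w) \<and> snd w \<in> H (fst v))))"

definition idnc_clique ::
  "nat \<Rightarrow> nat \<Rightarrow> (nat \<Rightarrow> nat set) \<Rightarrow> (nat \<Rightarrow> nat set) \<Rightarrow> (nat \<times> nat) set \<Rightarrow> bool" where
  "idnc_clique N M H W K = (K \<subseteq> idnc_vertices N M H W \<and>
      (\<forall>v\<in>K. \<forall>w\<in>K. v \<noteq> w \<longrightarrow> idnc_adj H v w))"

definition maximal_clique ::
  "nat \<Rightarrow> nat \<Rightarrow> (nat \<Rightarrow> nat set) \<Rightarrow> (nat \<Rightarrow> nat set) \<Rightarrow> (nat \<times> nat) set \<Rightarrow> bool" where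
  "maximal_clique N M H W K = (idnc_clique N M H W K \<and>
      (\<forall>K'. idnc_clique N M H W K' \<and> K \<subseteq> K' \<longrightarrow> K' = K))"

definition T_rho :: "nat \<Rightarrow> (nat \<Rightarrow> nat set) \<Rightarrow> (nat \<times> nat) set \<Rightarrow> nat set" where
  "T_rho M W K = {i. \<exists>j. (i,j) \<in> K \<and> (i,j) \<in> primary_vertices M W}"

definition T_sigma ::
  "nat \<Rightarrow> nat \<Rightarrow> (nat \<Rightarrow> nat set) \<Rightarrow> (nat \<Rightarrow> nat set) \<Rightarrow> (nat \<times> nat) set \<Rightarrow> nat set" where
  "T_sigma N M H W K = {i. \<exists>j. (i,j) \<in> K \<and> (i,j) \<in> secondary_vertices N M H W}"

definition T_all ::
  "nat \<Rightarrow> nat \<Rightarrow> (nat \<Rightarrow> nat set) \<Rightarrow> (nat \<Rightarrow> nat set) \<Rightarrow> (nat \<times> nat) set \<Rightarrow> nat set" where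
  "T_all N M H W K = T_rho M W K \<union> T_sigma N M H W K"

text \<open>Expected primary degree of a vertex of receiver i for cardinality vectors rho, psi.\<close>
definition D_exp :: "nat \<Rightarrow> nat \<Rightarrow> (nat \<Rightarrow> real) \<Rightarrow> (nat \<Rightarrow> real) \<Rightarrow> nat \<Rightarrow> real" where
  "D_exp N M rho psi i =
     (\<Sum>k\<in>{1..M} - {i}. psi k / real N * (1 + rho k * rho i / (real N - 1)))"

definition reception_pmf :: "nat set \<Rightarrow> (nat \<Rightarrow> real) \<Rightarrow> (nat \<Rightarrow> bool) pmf" where
  "reception_pmf T q = Pi_pmf T False (\<lambda>k. bernoulli_pmf (q k))"

definition rho_next :: "nat set \<Rightarrow> (nat \<Rightarrow> real) \<Rightarrow> (nat \<Rightarrow> bool) \<Rightarrow> nat \<Rightarrow> real" where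
  "rho_next T rho X k = (if k \<in> T then rho k + of_bool (X k) else rho k)"

definition psi_next :: "nat set \<Rightarrow> (nat \<Rightarrow> real) \<Rightarrow> (nat \<Rightarrow> bool) \<Rightarrow> nat \<Rightarrow> real" where
  "psi_next Tr psi X k = (if k \<in> Tr then psi k - of_bool (X k) else psi k)"

definition Phi :: "nat \<Rightarrow> (nat \<Rightarrow> real) \<Rightarrow> (nat \<Rightarrow> real) \<Rightarrow> (nat \<Rightarrow> real) \<Rightarrow> nat \<Rightarrow> nat \<Rightarrow> real \<Rightarrow> real" where
  "Phi N q rho psi i k x =
     q k / real N * (1 + (rho k - psi k + 1) * (rho i + x) / (real N - 1))"

definition Lambda :: "nat \<Rightarrow> (nat \<Rightarrow> real) \<Rightarrow> (nat \<Rightarrow> real) \<Rightarrow> (nat \<Rightarrow> real) \<Rightarrow> nat \<Rightarrow> nat \<Rightarrow> real \<Rightarrow> real" where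
  "Lambda N q rho psi i k x = q k * psi k * (rho i + x) / (real N * (real N - 1))"

definition xi :: "nat \<Rightarrow> (nat \<Rightarrow> real) \<Rightarrow> (nat \<Rightarrow> real) \<Rightarrow> nat \<Rightarrow> real" where
  "xi N rho psi k = psi k * rho k / (real N * (real N - 1))"

end

theory Submission
  imports Defs
begin

text \<open>
  The expected degree is a finite sum over receivers k \<noteq> i of terms that depend on the receptions
  only through the two indicators X k and X i, which are independent Bernoulli variables. Each
  term is therefore a bilinear interpolation of its four boolean values at the reception
  probabilities. For a receiver k with a primary vertex in the clique, the product
  (psi k - X k) * (rho k + X k) collapses, since X k is 0 or 1, to
  psi k * rho k + (psi k - rho k - 1) * X k; this produces Phi. A receiver with a secondary vertex
  only gains a packet, which produces Lambda. A clique never contains a primary and a secondary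
  vertex of the same receiver, so the two cases do not overlap.
\<close>

lemma Pi_pmf_pair_components:
  assumes "finite A" "x \<noteq> y"
  shows "map_pmf (\<lambda>f. (f x, f y)) (Pi_pmf A dflt p) =
         pair_pmf (if x \<in> A then p x else return_pmf dflt) (if y \<in> A then p y else return_pmf dflt)"
proof -
  let ?h = "\<lambda>(f, g) z. if z \<in> A \<inter> {x} then f z else g z"
  let ?P = "pair_pmf (Pi_pmf (A \<inter> {x}) dflt p) (Pi_pmf (A - {x}) dflt p)"
  have "Pi_pmf A dflt p = Pi_pmf (A \<inter> {x} \<union> (A - {x})) dflt p"
    by (simp add: Int_Diff_Un)
  also have "\<dots> = map_pmf ?h ?P"
    using assms(1) by (intro Pi_pmf_union) auto
  finally have "map_pmf (\<lambda>f. (f x, f y)) (Pi_pmf A dflt p) = map_pmf (\<lambda>fg. (?h fg x, ?h fg y)) ?P"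
    by (simp add: pmf.map_comp o_def)
  also have "\<dots> = map_pmf (\<lambda>(f, g). (f x, g y)) ?P"
    using assms set_Pi_pmf_subset[of "A \<inter> {x}" dflt p] set_Pi_pmf_subset[of "A - {x}" dflt p]
    by (intro map_pmf_cong) fastforce+
  also have "\<dots> = pair_pmf (map_pmf (\<lambda>f. f x) (Pi_pmf (A \<inter> {x}) dflt p))
                            (map_pmf (\<lambda>g. g y) (Pi_pmf (A - {x}) dflt p))"
    by (rule map_pair)
  also have "\<dots> = pair_pmf (if x \<in> A then p x else return_pmf dflt) (if y \<in> A then p y else return_pmf dflt)"
    using assms by (simp add: Pi_pmf_component)
  finally show ?thesis .
qed

lemma bernoulli_pmf_0: "bernoulli_pmf 0 = return_pmf False"
  by (rule pmf_eqI) (auto simp: pmf_return split: split_indicator)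

text \<open>Receivers outside T do not listen: their indicator is the default False.\<close>
definition reception_prob :: "nat set \<Rightarrow> (nat \<Rightarrow> real) \<Rightarrow> nat \<Rightarrow> real" where
  "reception_prob T q k = (if k \<in> T then q k else 0)"

lemma reception_pmf_pair:
  assumes "finite T" "k \<noteq> i"
  shows "map_pmf (\<lambda>X. (X k, X i)) (reception_pmf T q) =
         pair_pmf (bernoulli_pmf (reception_prob T q k)) (bernoulli_pmf (reception_prob T q i))"
  using Pi_pmf_pair_components[OF assms, of False "\<lambda>k. bernoulli_pmf (q k)"]
  by (simp add: reception_pmf_def reception_prob_def bernoulli_pmf_0 if_distrib)

lemma expectation_reception_pmf_pair:
  fixes f :: "bool \<Rightarrow> bool \<Rightarrow> real"
  assumes "finite T" "\<forall>k\<in>T. 0 \<le> q k \<and> q k \<le> 1" "k \<noteq> i"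
  defines "a \<equiv> reception_prob T q k" and "b \<equiv> reception_prob T q i"
  shows "measure_pmf.expectation (reception_pmf T q) (\<lambda>X. f (X k) (X i)) =
           a * b * f True True + a * (1 - b) * f True False
         + (1 - a) * b * f False True + (1 - a) * (1 - b) * f False False"
proof -
  have prob: "0 \<le> reception_prob T q j" "reception_prob T q j \<le> 1" for j
    using assms(2) by (auto simp: reception_prob_def)
  have "measure_pmf.expectation (reception_pmf T q) (\<lambda>X. f (X k) (X i))
      = measure_pmf.expectation (map_pmf (\<lambda>X. (X k, X i)) (reception_pmf T q)) (case_prod f)"
    by simp
  also have "\<dots> = (\<Sum>uv\<in>{(True, True), (True, False), (False, True), (False, False)}.
                      case_prod f uv * pmf (pair_pmf (bernoulli_pmf a) (bernoulli_pmf b)) uv)"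
    unfolding reception_pmf_pair[OF assms(1,3)] a_def b_def
    by (rule integral_measure_pmf_real) (auto intro: bool.exhaust)
  also have "\<dots> = a * b * f True True + a * (1 - b) * f True False
         + (1 - a) * b * f False True + (1 - a) * (1 - b) * f False False"
    using prob by (simp add: a_def b_def pmf_pair)
  finally show ?thesis .
qed

definition degree_term :: "nat \<Rightarrow> (nat \<Rightarrow> real) \<Rightarrow> (nat \<Rightarrow> real) \<Rightarrow> nat \<Rightarrow> nat \<Rightarrow> real" where
  "degree_term N rho psi i k = psi k / real N * (1 + rho k * rho i / (real N - 1))"

lemma D_exp_eq_sum_degree_term:
  "D_exp N M rho psi i = (\<Sum>k\<in>{1..M} - {i}. degree_term N rho psi i k)"
  by (simp add: D_exp_def degree_term_def)

lemma expectation_degree_term_next: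
  assumes "finite T" "T = Tr \<union> Ts" "Tr \<inter> Ts = {}" "\<forall>k\<in>T. 0 \<le> q k \<and> q k \<le> 1" "k \<noteq> i"
  defines "s \<equiv> reception_prob T q i"
  shows "measure_pmf.expectation (reception_pmf T q)
           (\<lambda>X. degree_term N (rho_next T rho X) (psi_next Tr psi X) i k)
       = degree_term N rho psi i k + s * xi N rho psi k
         - (if k \<in> Tr then Phi N q rho psi i k s else 0)
         + (if k \<in> Ts then Lambda N q rho psi i k s else 0)"
proof -
  define f where "f u v = (psi k - of_bool (k \<in> Tr \<and> u)) / real N *
      (1 + (rho k + of_bool (k \<in> T \<and> u)) * (rho i + of_bool (i \<in> T \<and> v)) / (real N - 1))" for u v
  have "degree_term N (rho_next T rho X) (psi_next Tr psi X) i k = f (X k) (X i)" for X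
    by (simp add: f_def degree_term_def rho_next_def psi_next_def)
  then have "measure_pmf.expectation (reception_pmf T q)
           (\<lambda>X. degree_term N (rho_next T rho X) (psi_next Tr psi X) i k)
      = measure_pmf.expectation (reception_pmf T q) (\<lambda>X. f (X k) (X i))"
    by simp
  also have "\<dots> = reception_prob T q k * s * f True True + reception_prob T q k * (1 - s) * f True False
         + (1 - reception_prob T q k) * s * f False True + (1 - reception_prob T q k) * (1 - s) * f False False"
    unfolding s_def using assms(1,4,5) by (rule expectation_reception_pmf_pair)
  also have "\<dots> = degree_term N rho psi i k + s * xi N rho psi k
         - (if k \<in> Tr then Phi N q rho psi i k s else 0)
         + (if k \<in> Ts then Lambda N q rho psi i k s else 0)"
  proof -
    consider "k \<in> Tr" "k \<notin> Ts" | "k \<in> Ts" "k \<notin> Tr" | "k \<notin> T" "k \<notin> Tr" "k \<notin> Ts"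
      using assms(2,3) by blast
    then show ?thesis
      using assms(2)
      unfolding f_def s_def reception_prob_def degree_term_def Phi_def Lambda_def xi_def
        divide_inverse inverse_mult_distrib
      by cases (cases "i \<in> T"; simp add: algebra_simps)+
  qed
  finally show ?thesis .
qed

lemma expectation_D_exp_next:
  fixes i :: nat
  assumes "T = Tr \<union> Ts" "Tr \<inter> Ts = {}" "T \<subseteq> {1..M}" "\<forall>k\<in>T. 0 \<le> q k \<and> q k \<le> 1"
  defines "s \<equiv> reception_prob T q i"
  shows "measure_pmf.expectation (reception_pmf T q)
           (\<lambda>X. D_exp N M (rho_next T rho X) (psi_next Tr psi X) i)
       = D_exp N M rho psi i + ((\<Sum>k\<in>{1..M} - {i}. s * xi N rho psi k)
          - (\<Sum>k\<in>Tr - {i}. Phi N q rho psi i k s)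
          + (\<Sum>k\<in>Ts - {i}. Lambda N q rho psi i k s))"
proof -
  have "finite T"
    using assms(3) finite_subset by blast
  have restrict: "(\<Sum>k\<in>{1..M} - {i}. if k \<in> S then g k else 0) = (\<Sum>k\<in>S - {i}. g k)"
    if "S \<subseteq> T" for S and g :: "nat \<Rightarrow> real"
  proof -
    have "S - {i} = ({1..M} - {i}) \<inter> S"
      using that assms(3) by auto
    then show ?thesis
      by (simp add: sum.inter_restrict)
  qed
  have "measure_pmf.expectation (reception_pmf T q)
           (\<lambda>X. D_exp N M (rho_next T rho X) (psi_next Tr psi X) i)
      = (\<Sum>k\<in>{1..M} - {i}. measure_pmf.expectation (reception_pmf T q)
           (\<lambda>X. degree_term N (rho_next T rho X) (psi_next Tr psi X) i k))"
    unfolding D_exp_eq_sum_degree_term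
    by (intro Bochner_Integration.integral_sum integrable_measure_pmf_finite)
       (auto simp: reception_pmf_def set_Pi_pmf \<open>finite T\<close>)
  also have "\<dots> = (\<Sum>k\<in>{1..M} - {i}. degree_term N rho psi i k + s * xi N rho psi k
         - (if k \<in> Tr then Phi N q rho psi i k s else 0)
         + (if k \<in> Ts then Lambda N q rho psi i k s else 0))"
    unfolding s_def using \<open>finite T\<close> assms(1,2,4)
    by (intro sum.cong refl expectation_degree_term_next) auto
  also have "\<dots> = D_exp N M rho psi i + ((\<Sum>k\<in>{1..M} - {i}. s * xi N rho psi k)
          - (\<Sum>k\<in>Tr - {i}. Phi N q rho psi i k s)
          + (\<Sum>k\<in>Ts - {i}. Lambda N q rho psi i k s))"
    using restrict[of Tr] restrict[of Ts] assms(1)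
    by (simp add: D_exp_eq_sum_degree_term sum.distrib sum_subtractf)
  finally show ?thesis .
qed

lemma T_rho_T_sigma_disjoint:
  assumes "idnc_clique N M H W K" "\<forall>k\<in>{1..M}. W k \<subseteq> Lacks N H k"
  shows "T_rho M W K \<inter> T_sigma N M H W K = {}"
proof (rule ccontr)
  assume "T_rho M W K \<inter> T_sigma N M H W K \<noteq> {}"
  then obtain k j l where kj: "(k, j) \<in> K" "(k, j) \<in> primary_vertices M W"
    and kl: "(k, l) \<in> K" "(k, l) \<in> secondary_vertices N M H W"
    by (auto simp: T_rho_def T_sigma_def)
  then have "j \<in> W k" "l \<notin> W k" "j \<notin> H k"
    using assms(2) by (auto simp: primary_vertices_def secondary_vertices_def Lacks_def)
  moreover have "idnc_adj H (k, j) (k, l)"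
    using assms(1) kj kl \<open>j \<in> W k\<close> \<open>l \<notin> W k\<close> unfolding idnc_clique_def by auto
  ultimately show False
    by (auto simp: idnc_adj_def)
qed

lemma T_all_subset: "T_all N M H W K \<subseteq> {1..M}"
  by (auto simp: T_all_def T_rho_def T_sigma_def primary_vertices_def secondary_vertices_def)

theorem theorem5:
  fixes N M :: nat and H W :: "nat \<Rightarrow> nat set" and q :: "nat \<Rightarrow> real"
    and K :: "(nat \<times> nat) set" and i :: nat
  defines "rho \<equiv> (\<lambda>k. real (card (H k)))"
      and "psi \<equiv> (\<lambda>k. real (card (W k)))"
      and "Tr \<equiv> T_rho M W K"
      and "Ts \<equiv> T_sigma N M H W K"
      and "T \<equiv> T_all N M H W K"
  assumes N2: "N \<ge> 2"
      and H_sub: "\<forall>k\<in>{1..M}. H k \<subseteq> {1..N}"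
      and W_sub: "\<forall>k\<in>{1..M}. W k \<subseteq> Lacks N H k"
      and q_prob: "\<forall>k\<in>{1..M}. 0 \<le> q k \<and> q k \<le> 1"
      and K_max: "maximal_clique N M H W K"
      and i_recv: "i \<in> {1..M}"
  shows
    "(i \<in> T \<longrightarrow>
       measure_pmf.expectation (reception_pmf T q)
         (\<lambda>X. D_exp N M (rho_next T rho X) (psi_next Tr psi X) i)
       = D_exp N M rho psi i +
         ((\<Sum>k\<in>{1..M} - {i}. q i * xi N rho psi k)
          - (\<Sum>k\<in>Tr - {i}. Phi N q rho psi i k (q i))
          + (\<Sum>k\<in>Ts - {i}. Lambda N q rho psi i k (q i))))
   \<and> (i \<notin> T \<longrightarrow>
       measure_pmf.expectation (reception_pmf T q)
         (\<lambda>X. D_exp N M (rho_next T rho X) (psi_next Tr psi X) i)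
       = D_exp N M rho psi i +
         (- (\<Sum>k\<in>Tr - {i}. Phi N q rho psi i k 0)
          + (\<Sum>k\<in>Ts - {i}. Lambda N q rho psi i k 0)))"
proof -
  have "Tr \<inter> Ts = {}"
    unfolding Tr_def Ts_def
    using K_max W_sub by (intro T_rho_T_sigma_disjoint) (auto simp: maximal_clique_def)
  moreover have "T = Tr \<union> Ts"
    by (simp add: T_def Tr_def Ts_def T_all_def)
  moreover have "T \<subseteq> {1..M}"
    unfolding T_def by (rule T_all_subset)
  moreover have "\<forall>k\<in>T. 0 \<le> q k \<and> q k \<le> 1"
    using q_prob \<open>T \<subseteq> {1..M}\<close> by blast
  ultimately have "measure_pmf.expectation (reception_pmf T q)
         (\<lambda>X. D_exp N M (rho_next T rho X) (psi_next Tr psi X) i)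
       = D_exp N M rho psi i + ((\<Sum>k\<in>{1..M} - {i}. reception_prob T q i * xi N rho psi k)
          - (\<Sum>k\<in>Tr - {i}. Phi N q rho psi i k (reception_prob T q i))
          + (\<Sum>k\<in>Ts - {i}. Lambda N q rho psi i k (reception_prob T q i)))"
    by (intro expectation_D_exp_next)
  then show ?thesis
    by (simp add: reception_prob_def)
qed

end
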